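(* Consider MDVI$(\alpha,K,M)$ with any $\alpha\in[0,1)$ and positive integers $K,M$ on an MDP as in the context, let $\delta\in(0,1)$, and let $\mathcal{E}_1$, $\mathcal{E}_2$ be the events defined in the context. On the event $\mathcal{E}_1\cap\mathcal{E}_2$, for every $k\in\{1,\dots,K-1\}$, $$\sigma(v_k) \leq 2H\min\left\{1,\ 2\max\{\alpha,\gamma\}^{k-1} + \frac{A_{\gamma,k-1}}{A_\infty} + 6H\sqrt{\frac{\iota_1}{M}}\right\}\mathbf{1} + \sigma(v^* )$$ (componentwise). Furthermore, $\sigma(v_0)=0$.
   Context: MDP: finite state set $\mathcal{X}$, finite action set $\mathcal{A}$, discount $\gamma\in[0,1)$, reward $r\in[-1,1]^{\mathcal{X}\times\mathcal{A}}$, transition kernel $P(y|x,a)$, $H=1/(1-\gamma)$, $(Pv)(x,a)=\sum_y P(y|x,a)v(y)$; $v^*$ is the optimal state-value function; $\mathbf 1$ the all-ones vector. MDVI$(\alpha,K,M)$: $s_0 = 0$, $w_0=w_{-1}=0$; for $k=0,\dots,K-1$: $v_k = w_k-\alpha w_{k-1}$; for each $(x,a)$, independent samples $y_{k,m,x,a}\sim P(\cdot|x,a)$, $m\in[M]$; $q_{k+1}(x,a) = r(x,a)+\frac{\gamma}{M}\sum_m v_k(y_{k,m,x,a})$; $s_{k+1}=q_{k+1}+\alpha s_k$; $w_{k+1}(x)=\max_a s_{k+1}(x,a)$. Notation: for $v\in\mathbb{R}^{\mathcal{X}}$, $\mathrm{Var}_P(v)(x,a) = (Pv^2)(x,a)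 - (Pv)^2(x,a)$ and $\sigma(v)=\sqrt{\mathrm{Var}_P(v)}$. $\widehat P_k v(x,a) = \frac1M\sum_m v(y_{k,m,x,a})$; $\varepsilon_k = \gamma\widehat P_{k-1}v_{k-1} - \gamma P v_{k-1}$; $E_k = \sum_{j=1}^k\alpha^{k-j}\varepsilon_j$; $A_\infty = 1/(1-\alpha)$; $A_{\gamma,k}=\sum_{j=0}^{k-1}\gamma^{k-j}\alpha^j$ (so $A_{\gamma,0}=0$); $\iota_1 = \log(8K|\mathcal{X}||\mathcal{A}|/\delta)$. $\mathcal{E}_1$: $\|E_k\|_\infty<3H\sqrt{A_\infty\iota_1/M}$ for all $k\in[K]$; $\mathcal{E}_2$: $\|\varepsilon_k\|_\infty<3H\sqrt{\iota_1/M}$ for all $k\in[K]$. *)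

theory Defs
  imports Complex_Main
begin

text \<open>MDP: states of finite type 'x, actions of finite type 'a,
  kernel P x a y = P(y|x,a), reward r x a, discount gamma.\<close>

definition Pv :: "('x::finite \<Rightarrow> 'a \<Rightarrow> 'x \<Rightarrow> real) \<Rightarrow> ('x \<Rightarrow> real) \<Rightarrow> 'x \<Rightarrow> 'a \<Rightarrow> real" where
  "Pv P v x a = (\<Sum>y\<in>UNIV. P x a y * v y)"

definition VarP :: "('x::finite \<Rightarrow> 'a \<Rightarrow> 'x \<Rightarrow> real) \<Rightarrow> ('x \<Rightarrow> real) \<Rightarrow> 'x \<Rightarrow> 'a \<Rightarrow> real" where
  "VarP P v x a = Pv P (\<lambda>y. (v y)\<^sup>2) x a - (Pv P v x a)\<^sup>2"

definition sigmaP :: "('x::finite \<Rightarrow> 'a \<Rightarrow> 'x \<Rightarrow> real) \<Rightarrow> ('x \<Rightarrow> real) \<Rightarrow> 'x \<Rightarrow> 'a \<Rightarrow> real" where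
  "sigmaP P v x a = sqrt (VarP P v x a)"

definition is_mdp :: "('x::finite \<Rightarrow> 'a::finite \<Rightarrow> 'x \<Rightarrow> real) \<Rightarrow> ('x \<Rightarrow> 'a \<Rightarrow> real) \<Rightarrow> real \<Rightarrow> bool" where
  "is_mdp P r \<gamma> \<longleftrightarrow> 0 \<le> \<gamma> \<and> \<gamma> < 1 \<and>
     (\<forall>x a. \<bar>r x a\<bar> \<le> 1) \<and>
     (\<forall>x a y. 0 \<le> P x a y) \<and> (\<forall>x a. (\<Sum>y\<in>UNIV. P x a y) = 1)"

definition bellman_opt :: "('x::finite \<Rightarrow> 'a::finite \<Rightarrow> 'x \<Rightarrow> real) \<Rightarrow> ('x \<Rightarrow> 'a \<Rightarrow> real) \<Rightarrow> real \<Rightarrow> ('x \<Rightarrow> real) \<Rightarrow> 'x \<Rightarrow> real" where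
  "bellman_opt P r \<gamma> v x = Max (range (\<lambda>a. r x a + \<gamma> * Pv P v x a))"

definition vstar :: "('x::finite \<Rightarrow> 'a::finite \<Rightarrow> 'x \<Rightarrow> real) \<Rightarrow> ('x \<Rightarrow> 'a \<Rightarrow> real) \<Rightarrow> real \<Rightarrow> 'x \<Rightarrow> real" where
  "vstar P r \<gamma> = (THE v. bellman_opt P r \<gamma> v = v)"

text \<open>MDVI iterates. Samples: y k m x a = y_{k,m,x,a} (m ranges over {0..<M}).
  mdvi_sw k = (s_k, w_k, w_{k-1}).\<close>
fun mdvi_sw :: "('x::finite \<Rightarrow> 'a::finite \<Rightarrow> real) \<Rightarrow> real \<Rightarrow> real \<Rightarrow> nat \<Rightarrow>
    (nat \<Rightarrow> nat \<Rightarrow> 'x \<Rightarrow> 'a \<Rightarrow> 'x) \<Rightarrow> nat \<Rightarrow> ('x \<Rightarrow> 'a \<Rightarrow> real) \<times> ('x \<Rightarrow> real) \<times> ('x \<Rightarrow> real)" where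
  "mdvi_sw r \<gamma> \<alpha> M y 0 = ((\<lambda>x a. 0), (\<lambda>x. 0), (\<lambda>x. 0))"
| "mdvi_sw r \<gamma> \<alpha> M y (Suc k) =
     (let (s, w, wp) = mdvi_sw r \<gamma> \<alpha> M y k;
          v = (\<lambda>x. w x - \<alpha> * wp x);
          q = (\<lambda>x a. r x a + \<gamma> / real M * (\<Sum>m<M. v (y k m x a)));
          s' = (\<lambda>x a. q x a + \<alpha> * s x a)
      in (s', (\<lambda>x. Max (range (s' x))), w))"

definition mdvi_v :: "('x::finite \<Rightarrow> 'a::finite \<Rightarrow> real) \<Rightarrow> real \<Rightarrow> real \<Rightarrow> nat \<Rightarrow>
    (nat \<Rightarrow> nat \<Rightarrow> 'x \<Rightarrow> 'a \<Rightarrow> 'x) \<Rightarrow> nat \<Rightarrow> 'x \<Rightarrow> real" where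
  "mdvi_v r \<gamma> \<alpha> M y k x =
     (case mdvi_sw r \<gamma> \<alpha> M y k of (s, w, wp) \<Rightarrow> w x - \<alpha> * wp x)"

definition Phat :: "nat \<Rightarrow> (nat \<Rightarrow> nat \<Rightarrow> 'x \<Rightarrow> 'a \<Rightarrow> 'x) \<Rightarrow> nat \<Rightarrow> ('x \<Rightarrow> real) \<Rightarrow> 'x \<Rightarrow> 'a \<Rightarrow> real" where
  "Phat M y k v x a = (\<Sum>m<M. v (y k m x a)) / real M"

definition mdvi_eps :: "('x::finite \<Rightarrow> 'a::finite \<Rightarrow> 'x \<Rightarrow> real) \<Rightarrow> ('x \<Rightarrow> 'a \<Rightarrow> real) \<Rightarrow> real \<Rightarrow> real \<Rightarrow> nat \<Rightarrow>
    (nat \<Rightarrow> nat \<Rightarrow> 'x \<Rightarrow> 'a \<Rightarrow> 'x) \<Rightarrow> nat \<Rightarrow> 'x \<Rightarrow> 'a \<Rightarrow> real" where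
  "mdvi_eps P r \<gamma> \<alpha> M y k x a =
     \<gamma> * Phat M y (k - 1) (mdvi_v r \<gamma> \<alpha> M y (k - 1)) x a - \<gamma> * Pv P (mdvi_v r \<gamma> \<alpha> M y (k - 1)) x a"

definition mdvi_E :: "('x::finite \<Rightarrow> 'a::finite \<Rightarrow> 'x \<Rightarrow> real) \<Rightarrow> ('x \<Rightarrow> 'a \<Rightarrow> real) \<Rightarrow> real \<Rightarrow> real \<Rightarrow> nat \<Rightarrow>
    (nat \<Rightarrow> nat \<Rightarrow> 'x \<Rightarrow> 'a \<Rightarrow> 'x) \<Rightarrow> nat \<Rightarrow> 'x \<Rightarrow> 'a \<Rightarrow> real" where
  "mdvi_E P r \<gamma> \<alpha> M y k x a = (\<Sum>j=1..k. \<alpha> ^ (k - j) * mdvi_eps P r \<gamma> \<alpha> M y j x a)"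

definition A_inf :: "real \<Rightarrow> real" where
  "A_inf \<alpha> = 1 / (1 - \<alpha>)"

definition A_gamma :: "real \<Rightarrow> real \<Rightarrow> nat \<Rightarrow> real" where
  "A_gamma \<gamma> \<alpha> k = (\<Sum>j<k. \<gamma> ^ (k - j) * \<alpha> ^ j)"

definition iota1 :: "nat \<Rightarrow> nat \<Rightarrow> nat \<Rightarrow> real \<Rightarrow> real" where
  "iota1 K nX nA \<delta> = ln (8 * real K * real nX * real nA / \<delta>)"

end

theory Submission
  imports Defs "HOL-Analysis.Analysis"
begin

(*
  sigma(v)(x,a) is the L2(P(.|x,a))-norm of v - P v; hence it is subadditive and bounded by the sup norm:
  sigma(v_k) <= max_y |v_k y - vstar y| + sigma(vstar), and it remains to bound |v_k - vstar|.
  Both v_k and vstar are bounded by H, which gives the bound 2H.  For the finer bound let eta = 3H sqrt(iota/M),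
  which on E1 and E2 bounds every |eps_j| and (1 - alpha) |E_j|, and unroll
    s_k = (sum_{j<k} alpha^j) r + gamma P w_{k-1} + E_k.
  Upper bound: at the greedy action of s_k, v_k <= r + gamma P v_{k-1} + eps_k, so by induction
  v_k - vstar <= gamma^k H + H eta.
  Lower bound: v_k = (1 - alpha) w_k + alpha (w_k - w_{k-1}).  Evaluating s_k at an optimal action of vstar
  gives (sum_{j<k} alpha^j) vstar - w_k <= H A_{gamma,k} + H eta / (1 - alpha), and evaluating s_k - s_{k-1} at
  the greedy action of s_{k-1} gives w_{k-1} - w_k <= sum_{i<k} gamma^(k-1-i) alpha^i + 2 H eta.
  The resulting bound is compared with the claimed one via (alpha - gamma) A_{gamma,m} = gamma (alpha^m - gamma^m).
*)

section \<open>Expectation and variance under a stochastic kernel\<close>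

definition stochastic_kernel :: "('x::finite \<Rightarrow> 'a \<Rightarrow> 'x \<Rightarrow> real) \<Rightarrow> bool" where
  "stochastic_kernel P \<longleftrightarrow> (\<forall>x a y. 0 \<le> P x a y) \<and> (\<forall>x a. (\<Sum>y\<in>UNIV. P x a y) = 1)"

lemma is_mdp_stochastic_kernel: "is_mdp P r \<gamma> \<Longrightarrow> stochastic_kernel P"
  by (simp add: is_mdp_def stochastic_kernel_def)

lemma Pv_add: "Pv P (\<lambda>y. u y + v y) x a = Pv P u x a + Pv P v x a"
  by (simp add: Pv_def algebra_simps sum.distrib)

lemma Pv_diff: "Pv P (\<lambda>y. u y - v y) x a = Pv P u x a - Pv P v x a"
  by (simp add: Pv_def algebra_simps sum_subtractf)

lemma Pv_cmult: "Pv P (\<lambda>y. c * u y) x a = c * Pv P u x a"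
  by (simp add: Pv_def sum_distrib_left algebra_simps)

lemma Pv_const: "stochastic_kernel P \<Longrightarrow> Pv P (\<lambda>y. c) x a = c"
  by (simp add: Pv_def stochastic_kernel_def flip: sum_distrib_right)

lemma Pv_mono:
  assumes "stochastic_kernel P" "\<And>y. u y \<le> v y"
  shows "Pv P u x a \<le> Pv P v x a"
  using assms unfolding Pv_def stochastic_kernel_def by (intro sum_mono mult_left_mono) auto

lemma Pv_abs_le:
  assumes P: "stochastic_kernel P" and u: "\<And>y. \<bar>u y\<bar> \<le> B"
  shows "\<bar>Pv P u x a\<bar> \<le> B"
proof -
  have "Pv P u x a \<le> Pv P (\<lambda>_. B) x a"
    using u by (intro Pv_mono[OF P]) (simp add: abs_le_iff)
  moreover have "Pv P (\<lambda>_. - B) x a \<le> Pv P u x a"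
    using u by (intro Pv_mono[OF P]) (metis abs_le_D2 minus_le_iff)
  ultimately show ?thesis
    by (simp add: Pv_const[OF P])
qed

lemma sigmaP_eq_L2_set:
  assumes "stochastic_kernel P"
  shows "sigmaP P f x a = L2_set (\<lambda>y. sqrt (P x a y) * (f y - Pv P f x a)) UNIV"
proof -
  have p: "\<And>y. 0 \<le> P x a y" and s: "(\<Sum>y\<in>UNIV. P x a y) = 1"
    using assms by (auto simp: stochastic_kernel_def)
  define m where "m = Pv P f x a"
  have "(\<Sum>y\<in>UNIV. (sqrt (P x a y) * (f y - m))\<^sup>2)
      = (\<Sum>y\<in>UNIV. P x a y * (f y)\<^sup>2 - 2 * m * (P x a y * f y) + m\<^sup>2 * P x a y)"
    by (rule sum.cong) (auto simp: power_mult_distrib p power2_eq_square algebra_simps)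
  also have "\<dots> = VarP P f x a"
    by (simp add: VarP_def Pv_def m_def s sum_subtractf sum.distrib flip: sum_distrib_left)
       (simp add: power2_eq_square)
  finally show ?thesis by (simp add: sigmaP_def L2_set_def m_def)
qed

lemma sigmaP_add_le:
  assumes "stochastic_kernel P"
  shows "sigmaP P (\<lambda>y. f y + g y) x a \<le> sigmaP P f x a + sigmaP P g x a"
  unfolding sigmaP_eq_L2_set[OF assms] Pv_add
  using L2_set_triangle_ineq[of "\<lambda>y. sqrt (P x a y) * (f y - Pv P f x a)"
                                "\<lambda>y. sqrt (P x a y) * (g y - Pv P g x a)" UNIV]
  by (simp add: algebra_simps)

lemma sigmaP_le:
  assumes P: "stochastic_kernel P" and f: "\<And>y. \<bar>f y\<bar> \<le> B"
  shows "sigmaP P f x a \<le> B"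
proof -
  have B: "0 \<le> B" using f[of undefined] by simp
  have "\<bar>(f y)\<^sup>2\<bar> \<le> B\<^sup>2" for y
    using power_mono[OF f[of y] abs_ge_zero, of 2] by simp
  then have "\<bar>Pv P (\<lambda>y. (f y)\<^sup>2) x a\<bar> \<le> B\<^sup>2"
    by (rule Pv_abs_le[OF P])
  then have "VarP P f x a \<le> B\<^sup>2"
    unfolding VarP_def using zero_le_power2[of "Pv P f x a"] by linarith
  then show ?thesis
    unfolding sigmaP_def by (rule real_le_lsqrt[OF B])
qed

lemma sigmaP_le_add:
  assumes P: "stochastic_kernel P" and fg: "\<And>y. \<bar>f y - g y\<bar> \<le> B"
  shows "sigmaP P f x a \<le> B + sigmaP P g x a"
proof -
  have "sigmaP P f x a \<le> sigmaP P (\<lambda>y. f y - g y) x a + sigmaP P g x a"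
    using sigmaP_add_le[OF P, of "\<lambda>y. f y - g y" g x a] by simp
  then show ?thesis using sigmaP_le[OF P, of "\<lambda>y. f y - g y", OF fg, of x a] by linarith
qed

section \<open>The Bellman optimality operator\<close>

lemma bellman_opt_ge: "r x a + \<gamma> * Pv P v x a \<le> bellman_opt P r \<gamma> v x"
  unfolding bellman_opt_def by (rule Max_ge) auto

lemma bellman_opt_attained: "\<exists>a. bellman_opt P r \<gamma> v x = r x a + \<gamma> * Pv P v x a"
proof -
  have "bellman_opt P r \<gamma> v x \<in> range (\<lambda>a. r x a + \<gamma> * Pv P v x a)"
    unfolding bellman_opt_def by (rule Max_in) auto
  then show ?thesis by auto
qed

lemma bellman_opt_contraction:
  assumes P: "stochastic_kernel P" and \<gamma>: "0 \<le> \<gamma>" and uv: "\<And>y. \<bar>u y - v y\<bar> \<le> B"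
  shows "\<bar>bellman_opt P r \<gamma> u x - bellman_opt P r \<gamma> v x\<bar> \<le> \<gamma> * B"
proof -
  have d: "\<bar>\<gamma> * Pv P u x a - \<gamma> * Pv P v x a\<bar> \<le> \<gamma> * B" for a
  proof -
    have "\<bar>Pv P u x a - Pv P v x a\<bar> \<le> B"
      using Pv_abs_le[OF P, where u = "\<lambda>y. u y - v y", OF uv] by (simp add: Pv_diff)
    then show ?thesis
      using \<gamma> by (simp add: abs_mult mult_left_mono flip: right_diff_distrib)
  qed
  obtain au where au: "bellman_opt P r \<gamma> u x = r x au + \<gamma> * Pv P u x au"
    using bellman_opt_attained by blast
  obtain av where av: "bellman_opt P r \<gamma> v x = r x av + \<gamma> * Pv P v x av"
    using bellman_opt_attained by blast
  show ?thesis
    using d[of au] d[of av] au av bellman_opt_ge[where v = u and a = av] bellman_opt_ge[where v = v and a = au]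
    by (smt (verit))
qed

lemma bellman_opt_abs_le:
  assumes mdp: "is_mdp P r \<gamma>" and v: "\<And>y. \<bar>v y\<bar> \<le> 1 / (1 - \<gamma>)"
  shows "\<bar>bellman_opt P r \<gamma> v x\<bar> \<le> 1 / (1 - \<gamma>)"
proof -
  have \<gamma>: "0 \<le> \<gamma>" "\<gamma> < 1" and r: "\<And>a. \<bar>r x a\<bar> \<le> 1"
    using mdp by (auto simp: is_mdp_def)
  obtain a where a: "bellman_opt P r \<gamma> v x = r x a + \<gamma> * Pv P v x a"
    using bellman_opt_attained by blast
  have "\<bar>\<gamma> * Pv P v x a\<bar> \<le> \<gamma> * (1 / (1 - \<gamma>))"
    using mult_left_mono[OF Pv_abs_le[OF is_mdp_stochastic_kernel[OF mdp], where u = v, OF v] \<gamma>(1)] \<gamma>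
    by (simp add: abs_mult)
  then have "\<bar>bellman_opt P r \<gamma> v x\<bar> \<le> 1 + \<gamma> * (1 / (1 - \<gamma>))"
    using a r[of a] by linarith
  also have "\<dots> = 1 / (1 - \<gamma>)"
    using \<gamma> by (simp add: field_simps)
  finally show ?thesis .
qed

lemma bellman_opt_fixpoint_unique:
  assumes mdp: "is_mdp P r \<gamma>"
    and u: "bellman_opt P r \<gamma> u = u" and v: "bellman_opt P r \<gamma> v = v"
  shows "u = v"
proof -
  have P: "stochastic_kernel P" and \<gamma>: "0 \<le> \<gamma>" "\<gamma> < 1"
    using mdp by (auto simp: is_mdp_def stochastic_kernel_def)
  define D where "D = Max (range (\<lambda>y. \<bar>u y - v y\<bar>))"
  have D: "\<bar>u y - v y\<bar> \<le> D" for y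
    unfolding D_def by (rule Max_ge) auto
  have "D \<in> range (\<lambda>y. \<bar>u y - v y\<bar>)"
    unfolding D_def by (rule Max_in) auto
  then obtain x where x: "D = \<bar>u x - v x\<bar>"
    by blast
  have "D \<le> \<gamma> * D"
    using bellman_opt_contraction[OF P \<gamma>(1), where u = u and v = v, OF D] u v x
    by metis
  then have "D \<le> 0"
    using \<gamma> by (simp add: mult_le_cancel_right1)
  then show ?thesis
    using D by (intro ext) (metis abs_le_zero_iff eq_iff_diff_eq_0 order.trans)
qed

lemma tendsto_bellman_opt:
  assumes P: "stochastic_kernel P" and \<gamma>: "0 \<le> \<gamma>" and V: "\<And>y. (\<lambda>n. V n y) \<longlonglongrightarrow> v y"
  shows "(\<lambda>n. bellman_opt P r \<gamma> (V n) x) \<longlonglongrightarrow> bellman_opt P r \<gamma> v x"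
proof (rule LIM_zero_cancel)
  have "(\<lambda>n. \<bar>V n y - v y\<bar>) \<longlonglongrightarrow> 0" for y
    using V[of y] by (intro tendsto_rabs_zero LIM_zero)
  then have lim: "(\<lambda>n. \<gamma> * (\<Sum>y\<in>UNIV. \<bar>V n y - v y\<bar>)) \<longlonglongrightarrow> 0"
    by (intro tendsto_mult_right_zero tendsto_null_sum)
  have "\<forall>n. norm (bellman_opt P r \<gamma> (V n) x - bellman_opt P r \<gamma> v x)
             \<le> \<gamma> * (\<Sum>y\<in>UNIV. \<bar>V n y - v y\<bar>)"
    unfolding real_norm_def by (intro allI bellman_opt_contraction[OF P \<gamma>] member_le_sum) auto
  from Lim_null_comparison[OF always_eventually[OF this] lim]
  show "(\<lambda>n. bellman_opt P r \<gamma> (V n) x - bellman_opt P r \<gamma> v x) \<longlonglongrightarrow> 0" .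
qed

lemma bellman_opt_iterates_abs_le:
  assumes "is_mdp P r \<gamma>"
  shows "\<bar>(bellman_opt P r \<gamma> ^^ n) (\<lambda>_. 0) x\<bar> \<le> 1 / (1 - \<gamma>)"
proof (induction n arbitrary: x)
  case 0
  then show ?case
    using assms by (simp add: is_mdp_def)
next
  case (Suc n)
  then show ?case
    by (simp add: bellman_opt_abs_le[OF assms])
qed

lemma bellman_opt_iterates_step:
  assumes mdp: "is_mdp P r \<gamma>"
  shows "\<bar>(bellman_opt P r \<gamma> ^^ Suc n) (\<lambda>_. 0) x - (bellman_opt P r \<gamma> ^^ n) (\<lambda>_. 0) x\<bar>
         \<le> \<gamma> ^ n * (1 / (1 - \<gamma>))"
proof (induction n arbitrary: x)
  case 0
  then show ?case
    using bellman_opt_iterates_abs_le[OF mdp, of 1 x] by simp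
next
  case (Suc n)
  have "0 \<le> \<gamma>"
    using mdp by (simp add: is_mdp_def)
  from bellman_opt_contraction[OF is_mdp_stochastic_kernel[OF mdp] this Suc.IH]
  show ?case
    by (simp add: mult.assoc)
qed

lemma bellman_opt_iterates_converge:
  assumes mdp: "is_mdp P r \<gamma>"
  obtains v where "\<And>x. (\<lambda>n. (bellman_opt P r \<gamma> ^^ n) (\<lambda>_. 0) x) \<longlonglongrightarrow> v x"
proof
  fix x
  define V where "V n = (bellman_opt P r \<gamma> ^^ n) (\<lambda>_. 0) x" for n
  have "summable (\<lambda>n. \<gamma> ^ n * (1 / (1 - \<gamma>)))"
    using mdp by (intro summable_mult2 summable_geometric) (simp add: is_mdp_def)
  then have "summable (\<lambda>n. V (Suc n) - V n)"
    unfolding V_def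
    by (rule summable_comparison_test') (simp only: real_norm_def bellman_opt_iterates_step[OF mdp])
  then have "(\<lambda>n. \<Sum>i<n. V (Suc i) - V i) \<longlonglongrightarrow> (\<Sum>n. V (Suc n) - V n)"
    by (rule summable_LIMSEQ)
  moreover have "(\<Sum>i<n. V (Suc i) - V i) = V n" for n
    using sum_lessThan_telescope[of V n] by (simp add: V_def)
  ultimately show "(\<lambda>n. V n) \<longlonglongrightarrow> (\<Sum>n. V (Suc n) - V n)"
    by simp
qed

lemma bellman_opt_has_bounded_fixpoint:
  assumes mdp: "is_mdp P r \<gamma>"
  obtains v where "bellman_opt P r \<gamma> v = v" "\<And>x. \<bar>v x\<bar> \<le> 1 / (1 - \<gamma>)"
proof -
  define V where "V n = (bellman_opt P r \<gamma> ^^ n) (\<lambda>_. 0)" for n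
  obtain v where V: "\<And>x. (\<lambda>n. V n x) \<longlonglongrightarrow> v x"
    unfolding V_def using bellman_opt_iterates_converge[OF mdp] by blast
  have "bellman_opt P r \<gamma> v = v"
  proof
    fix x
    have "0 \<le> \<gamma>"
      using mdp by (simp add: is_mdp_def)
    then have "(\<lambda>n. V (Suc n) x) \<longlonglongrightarrow> bellman_opt P r \<gamma> v x"
      using tendsto_bellman_opt[OF is_mdp_stochastic_kernel[OF mdp] _ V] by (simp add: V_def)
    moreover have "(\<lambda>n. V (Suc n) x) \<longlonglongrightarrow> v x"
      using V by (rule LIMSEQ_Suc)
    ultimately show "bellman_opt P r \<gamma> v x = v x"
      by (rule LIMSEQ_unique)
  qed
  moreover have "\<bar>v x\<bar> \<le> 1 / (1 - \<gamma>)" for x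
    using bellman_opt_iterates_abs_le[OF mdp]
    by (intro LIMSEQ_le_const2[OF tendsto_rabs[OF V]]) (auto simp: V_def)
  ultimately show thesis
    using that by blast
qed

lemma vstar_eq_fixpoint:
  assumes "is_mdp P r \<gamma>" and "bellman_opt P r \<gamma> v = v"
  shows "vstar P r \<gamma> = v"
  unfolding vstar_def using assms bellman_opt_fixpoint_unique by blast

lemma
  assumes "is_mdp P r \<gamma>"
  shows vstar_fixpoint: "bellman_opt P r \<gamma> (vstar P r \<gamma>) = vstar P r \<gamma>"
    and vstar_abs_le: "\<bar>vstar P r \<gamma> x\<bar> \<le> 1 / (1 - \<gamma>)"
proof -
  obtain v where "bellman_opt P r \<gamma> v = v" "\<And>x. \<bar>v x\<bar> \<le> 1 / (1 - \<gamma>)"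
    using bellman_opt_has_bounded_fixpoint[OF assms] by blast
  then show "bellman_opt P r \<gamma> (vstar P r \<gamma>) = vstar P r \<gamma>" "\<bar>vstar P r \<gamma> x\<bar> \<le> 1 / (1 - \<gamma>)"
    using vstar_eq_fixpoint[OF assms] by simp_all
qed

section \<open>Discounted power sums\<close>

definition pow_mix_sum :: "real \<Rightarrow> real \<Rightarrow> nat \<Rightarrow> real" where
  "pow_mix_sum \<gamma> \<alpha> k = (\<Sum>i<k. \<gamma> ^ (k - Suc i) * \<alpha> ^ i)"

lemma pow_mix_sum_0 [simp]: "pow_mix_sum \<gamma> \<alpha> 0 = 0"
  by (simp add: pow_mix_sum_def)

lemma pow_mix_sum_Suc: "pow_mix_sum \<gamma> \<alpha> (Suc k) = A_gamma \<gamma> \<alpha> k + \<alpha> ^ k"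
  by (simp add: pow_mix_sum_def A_gamma_def)

lemma pow_mix_sum_nonneg: "0 \<le> \<gamma> \<Longrightarrow> 0 \<le> \<alpha> \<Longrightarrow> 0 \<le> pow_mix_sum \<gamma> \<alpha> k"
  unfolding pow_mix_sum_def by (intro sum_nonneg mult_nonneg_nonneg zero_le_power)

lemma A_gamma_eq_pow_mix_sum: "A_gamma \<gamma> \<alpha> k = \<gamma> * pow_mix_sum \<gamma> \<alpha> k"
  unfolding A_gamma_def pow_mix_sum_def sum_distrib_left
  by (rule sum.cong) (auto simp: mult.assoc Suc_diff_Suc simp flip: power_Suc)

lemma A_gamma_nonneg: "0 \<le> \<gamma> \<Longrightarrow> 0 \<le> \<alpha> \<Longrightarrow> 0 \<le> A_gamma \<gamma> \<alpha> k"
  by (simp add: A_gamma_eq_pow_mix_sum pow_mix_sum_nonneg)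

lemma A_gamma_Suc: "A_gamma \<gamma> \<alpha> (Suc k) = \<gamma> * A_gamma \<gamma> \<alpha> k + \<gamma> * \<alpha> ^ k"
  by (simp add: A_gamma_eq_pow_mix_sum[of \<gamma> \<alpha> "Suc k"] pow_mix_sum_Suc distrib_left)

lemma diff_mult_A_gamma: "(\<alpha> - \<gamma>) * A_gamma \<gamma> \<alpha> k = \<gamma> * (\<alpha> ^ k - \<gamma> ^ k)"
  unfolding A_gamma_eq_pow_mix_sum pow_mix_sum_def power_diff_sumr2[of \<alpha> k \<gamma>]
  by (simp add: ac_simps)

lemma one_minus_gamma_mult_A_gamma_le:
  fixes \<alpha> \<gamma> :: real
  assumes "0 \<le> \<alpha>" "\<alpha> < 1" "0 \<le> \<gamma>" "\<gamma> < 1"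
  shows "(1 - \<gamma>) * \<alpha> * A_gamma \<gamma> \<alpha> m \<le> (1 - \<alpha>) * A_gamma \<gamma> \<alpha> m + max \<alpha> \<gamma> ^ m"
proof -
  have "0 \<le> (1 - \<alpha>) * (1 - \<gamma>) * A_gamma \<gamma> \<alpha> m"
    using assms A_gamma_nonneg[of \<gamma> \<alpha> m] by simp
  then have "(1 - \<gamma>) * \<alpha> * A_gamma \<gamma> \<alpha> m - (1 - \<alpha>) * A_gamma \<gamma> \<alpha> m \<le> (\<alpha> - \<gamma>) * A_gamma \<gamma> \<alpha> m"
    by (simp add: algebra_simps)
  also have "\<dots> = \<gamma> * (\<alpha> ^ m - \<gamma> ^ m)"
    by (rule diff_mult_A_gamma)
  also have "\<dots> \<le> \<alpha> ^ m"
    using assms mult_left_le_one_le[of "\<alpha> ^ m" \<gamma>] mult_left_mono[of "\<alpha> ^ m - \<gamma> ^ m" "\<alpha> ^ m" \<gamma>]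
    by simp
  also have "\<dots> \<le> max \<alpha> \<gamma> ^ m"
    using assms by (intro power_mono) auto
  finally show ?thesis
    by simp
qed

lemma A_gamma_Suc_error_le:
  fixes \<alpha> \<gamma> :: real
  assumes \<alpha>: "0 \<le> \<alpha>" "\<alpha> < 1" and \<gamma>: "0 \<le> \<gamma>" "\<gamma> < 1"
  shows "(1 - \<alpha>) * A_gamma \<gamma> \<alpha> (Suc m) + \<alpha> ^ Suc m + (1 - \<gamma>) * \<alpha> * pow_mix_sum \<gamma> \<alpha> (Suc m)
         \<le> 3 * max \<alpha> \<gamma> ^ m + 2 * (1 - \<alpha>) * A_gamma \<gamma> \<alpha> m"
proof -
  define A where "A = A_gamma \<gamma> \<alpha> m"
  define p where "p = \<alpha> ^ m"
  have A: "0 \<le> A"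
    using A_gamma_nonneg[OF \<gamma>(1) \<alpha>(1)] by (simp add: A_def)
  have p: "0 \<le> p" "p \<le> max \<alpha> \<gamma> ^ m"
    using \<alpha> \<gamma> by (auto simp: p_def intro: power_mono)
  have "(1 - \<alpha>) * \<gamma> * A \<le> (1 - \<alpha>) * A"
    using \<alpha> \<gamma> A by (intro mult_right_mono mult_right_le_one_le) auto
  moreover have "(1 - \<alpha>) * \<gamma> * p \<le> (1 - \<alpha>) * p"
    using \<alpha> \<gamma> p by (intro mult_right_mono mult_right_le_one_le) auto
  moreover have "(1 - \<gamma>) * \<alpha> * p \<le> p"
    using \<alpha> \<gamma> p by (intro mult_left_le_one_le mult_le_one) auto
  moreover have "(1 - \<alpha>) * A_gamma \<gamma> \<alpha> (Suc m) + \<alpha> ^ Suc m + (1 - \<gamma>) * \<alpha> * pow_mix_sum \<gamma> \<alpha> (Suc m)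
      = (1 - \<alpha>) * \<gamma> * A + ((1 - \<alpha>) * \<gamma> * p + \<alpha> * p) + (1 - \<gamma>) * \<alpha> * A + (1 - \<gamma>) * \<alpha> * p"
    by (simp add: A_gamma_Suc pow_mix_sum_Suc A_def p_def algebra_simps)
  ultimately show ?thesis
    using one_minus_gamma_mult_A_gamma_le[OF \<alpha> \<gamma>, of m] p unfolding A_def[symmetric]
    by (simp add: algebra_simps)
qed

lemma power_Suc_le_max_power:
  fixes \<alpha> \<gamma> :: real
  assumes "0 \<le> \<gamma>" "\<gamma> \<le> 1"
  shows "\<gamma> ^ Suc m \<le> max \<alpha> \<gamma> ^ m"
  using assms power_decreasing[of m "Suc m" \<gamma>] power_mono[OF max.cobounded2 assms(1), of m \<alpha>]
  by simp

section \<open>Error propagation in MDVI\<close>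

lemma Phat_abs_le:
  assumes "0 < M" and "\<And>z. \<bar>v z\<bar> \<le> B"
  shows "\<bar>Phat M y k v x a\<bar> \<le> B"
proof -
  have "\<bar>\<Sum>m<M. v (y k m x a)\<bar> \<le> (\<Sum>m<M. \<bar>v (y k m x a)\<bar>)"
    by (rule sum_abs)
  also have "\<dots> \<le> real M * B"
    using sum_mono[of "{..<M}" "\<lambda>m. \<bar>v (y k m x a)\<bar>" "\<lambda>_. B"] assms(2) by simp
  finally show ?thesis
    using assms(1) by (simp add: Phat_def abs_div pos_divide_le_eq mult.commute)
qed

lemma ex_Max_minus_Max_le:
  fixes f g :: "'a::finite \<Rightarrow> real"
  assumes "0 \<le> c"
  shows "\<exists>a. Max (range f) - c * Max (range g) \<le> f a - c * g a"
proof -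
  have "Max (range f) \<in> range f"
    by (rule Max_in) auto
  then obtain a where "Max (range f) = f a"
    by blast
  moreover have "c * g a \<le> c * Max (range g)"
    using assms by (intro mult_left_mono Max_ge) auto
  ultimately show ?thesis by (intro exI[of _ a]) linarith
qed

lemma ex_le_Max_minus_Max:
  fixes f g :: "'a::finite \<Rightarrow> real"
  shows "\<exists>a. f a - c * g a \<le> Max (range f) - c * Max (range g)"
proof -
  have "Max (range g) \<in> range g"
    by (rule Max_in) auto
  then obtain a where "Max (range g) = g a"
    by blast
  moreover have "f a \<le> Max (range f)"
    by (intro Max_ge) auto
  ultimately show ?thesis by (intro exI[of _ a]) simp
qed

locale mdvi =
  fixes P :: "'x::finite \<Rightarrow> 'a::finite \<Rightarrow> 'x \<Rightarrow> real"
    and r :: "'x \<Rightarrow> 'a \<Rightarrow> real" and \<gamma> \<alpha> :: real and M :: nat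
    and y :: "nat \<Rightarrow> nat \<Rightarrow> 'x \<Rightarrow> 'a \<Rightarrow> 'x"
  assumes mdp: "is_mdp P r \<gamma>"
    and alpha_nonneg: "0 \<le> \<alpha>" and alpha_lt_1: "\<alpha> < 1"
    and M_pos: "0 < M"
begin

definition horizon :: real where "horizon = 1 / (1 - \<gamma>)"

abbreviation "S k \<equiv> fst (mdvi_sw r \<gamma> \<alpha> M y k)"
abbreviation "W k \<equiv> fst (snd (mdvi_sw r \<gamma> \<alpha> M y k))"
abbreviation "V \<equiv> mdvi_v r \<gamma> \<alpha> M y"
abbreviation "\<epsilon> \<equiv> mdvi_eps P r \<gamma> \<alpha> M y"
abbreviation "E \<equiv> mdvi_E P r \<gamma> \<alpha> M y"
abbreviation "v_opt \<equiv> vstar P r \<gamma>"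

lemma stochastic_kernel: "stochastic_kernel P"
  using mdp by (rule is_mdp_stochastic_kernel)

lemma gamma_nonneg: "0 \<le> \<gamma>" and gamma_lt_1: "\<gamma> < 1"
  using mdp by (simp_all add: is_mdp_def)

lemma reward_abs_le: "\<bar>r x a\<bar> \<le> 1"
  using mdp by (simp add: is_mdp_def)

lemma horizon_nonneg: "0 \<le> horizon"
  using gamma_lt_1 by (simp add: horizon_def)

lemma horizon_mult_one_minus_gamma: "horizon * (1 - \<gamma>) = 1"
  using gamma_lt_1 by (simp add: horizon_def)

lemma gamma_horizon_plus_1: "\<gamma> * horizon + 1 = horizon"
  using horizon_mult_one_minus_gamma by (simp add: algebra_simps)

text \<open>Since \<open>w\<^sub>-\<^sub>1 = w\<^sub>0 = 0\<close>, the truncated \<open>k - 1\<close> is harmless at \<open>k = 0\<close>.\<close>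
lemma W_prev: "snd (snd (mdvi_sw r \<gamma> \<alpha> M y k)) = W (k - 1)"
  by (cases k) (simp_all add: Let_def case_prod_beta)

lemma V_eq: "V k x = W k x - \<alpha> * W (k - 1) x"
  by (simp add: mdvi_v_def case_prod_beta W_prev)

lemma W_eq_Max: "W k x = Max (range (S k x))"
  by (cases k) (simp_all add: Let_def case_prod_beta)

lemma S_Suc: "S (Suc k) x a = r x a + \<gamma> * Phat M y k (V k) x a + \<alpha> * S k x a"
proof -
  have "V k = (\<lambda>x. W k x - \<alpha> * W (k - 1) x)"
    by (rule ext) (rule V_eq)
  then show ?thesis
    by (simp add: Let_def case_prod_beta W_prev Phat_def)
qed

declare mdvi_sw.simps(2) [simp del]

lemma S_Suc_minus_S_eq_q:
  "S (Suc k) x a - \<alpha> * S k x a = r x a + \<gamma> * Pv P (V k) x a + \<epsilon> (Suc k) x a"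
  by (simp add: S_Suc mdvi_eps_def)

lemma E_0 [simp]: "E 0 x a = 0"
  by (simp add: mdvi_E_def)

lemma E_Suc: "E (Suc k) x a = \<epsilon> (Suc k) x a + \<alpha> * E k x a"
proof -
  have "(\<Sum>j=1..k. \<alpha> ^ (Suc k - j) * \<epsilon> j x a) = \<alpha> * E k x a"
    unfolding mdvi_E_def sum_distrib_left
    by (rule sum.cong) (auto simp: Suc_diff_le mult.assoc)
  then show ?thesis
    by (simp add: mdvi_E_def)
qed

lemma S_eq: "S k x a = (\<Sum>j<k. \<alpha> ^ j) * r x a + \<gamma> * Pv P (W (k - 1)) x a + E k x a"
proof (induction k arbitrary: x a)
  case 0
  then show ?case by (simp add: Pv_def)
next
  case (Suc k)
  have "S (Suc k) x a = r x a + \<gamma> * Pv P (V k) x a + \<epsilon> (Suc k) x a + \<alpha> * S k x a"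
    using S_Suc_minus_S_eq_q[of k x a] by simp
  also have "\<dots> = (\<Sum>j<Suc k. \<alpha> ^ j) * r x a + \<gamma> * Pv P (W k) x a + E (Suc k) x a"
    unfolding Suc.IH V_eq E_Suc sum.lessThan_Suc_shift
    by (simp add: Pv_diff Pv_cmult sum_distrib_left algebra_simps)
  finally show ?case
    by simp
qed

lemma S_Suc_minus_S:
  "S (Suc k) x a - S k x a
   = \<alpha> ^ k * r x a + \<gamma> * Pv P (\<lambda>z. W k z - W (k - 1) z) x a + \<epsilon> (Suc k) x a - (1 - \<alpha>) * E k x a"
  unfolding S_eq[of "Suc k"] S_eq[of k] E_Suc Pv_diff by (simp add: algebra_simps)

lemma ex_V_Suc_le: "\<exists>a. V (Suc k) x \<le> S (Suc k) x a - \<alpha> * S k x a"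
  unfolding V_eq W_eq_Max using ex_Max_minus_Max_le[OF alpha_nonneg] by simp

lemma ex_le_V_Suc: "\<exists>a. S (Suc k) x a - \<alpha> * S k x a \<le> V (Suc k) x"
  unfolding V_eq W_eq_Max using ex_le_Max_minus_Max by simp

lemma ex_le_W_Suc_minus_W: "\<exists>a. S (Suc k) x a - S k x a \<le> W (Suc k) x - W k x"
  unfolding W_eq_Max using ex_le_Max_minus_Max[where c = 1] by simp

lemma V_abs_le: "\<bar>V k x\<bar> \<le> horizon"
proof (induction k arbitrary: x)
  case 0
  then show ?case using horizon_nonneg by (simp add: V_eq)
next
  case (Suc k)
  have "\<bar>S (Suc k) x a - \<alpha> * S k x a\<bar> \<le> horizon" for a
  proof -
    have "\<bar>\<gamma> * Phat M y k (V k) x a\<bar> \<le> \<gamma> * horizon"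
      using mult_left_mono[OF Phat_abs_le[OF M_pos Suc.IH] gamma_nonneg] gamma_nonneg
      by (simp add: abs_mult)
    then show ?thesis
      using reward_abs_le[of x a] gamma_horizon_plus_1 by (simp add: S_Suc)
  qed
  then show ?case
    using ex_V_Suc_le[of k x] ex_le_V_Suc[of k x] by (smt (verit))
qed

lemma gamma_horizon_mult_plus: "\<gamma> * (horizon * c) + c = horizon * c"
  using gamma_horizon_plus_1 by (metis distrib_right mult.assoc mult_1)

lemma v_opt_abs_le: "\<bar>v_opt x\<bar> \<le> horizon"
  unfolding horizon_def by (rule vstar_abs_le[OF mdp])

lemma v_opt_ge: "r x a + \<gamma> * Pv P v_opt x a \<le> v_opt x"
  using bellman_opt_ge[of r x a \<gamma> P v_opt] vstar_fixpoint[OF mdp] by simp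

lemma ex_v_opt_eq: "\<exists>a. v_opt x = r x a + \<gamma> * Pv P v_opt x a"
  using bellman_opt_attained[of P r \<gamma> v_opt x] vstar_fixpoint[OF mdp] by simp

lemma V_minus_v_opt_le:
  assumes \<epsilon>_le: "\<And>j x a. 1 \<le> j \<Longrightarrow> j \<le> K \<Longrightarrow> \<bar>\<epsilon> j x a\<bar> \<le> \<eta>" and \<eta>: "0 \<le> \<eta>"
  shows "k \<le> K \<Longrightarrow> V k x - v_opt x \<le> \<gamma> ^ k * horizon + horizon * \<eta>"
proof (induction k arbitrary: x)
  case 0
  have "V 0 x = 0"
    by (simp add: V_eq)
  then show ?case
    using v_opt_abs_le[of x] mult_nonneg_nonneg[OF horizon_nonneg \<eta>] by simp
next
  case (Suc k)
  define B where "B = \<gamma> ^ k * horizon + horizon * \<eta>"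
  have "V k z \<le> v_opt z + B" for z
    using Suc.IH[OF Suc_leD[OF Suc.prems], of z] unfolding B_def by linarith
  then have "Pv P (V k) x a \<le> Pv P (\<lambda>z. v_opt z + B) x a" for a
    by (rule Pv_mono[OF stochastic_kernel])
  then have Pv_V: "\<gamma> * Pv P (V k) x a \<le> \<gamma> * Pv P v_opt x a + \<gamma> * B" for a
    using gamma_nonneg by (simp add: Pv_add Pv_const[OF stochastic_kernel] mult_left_mono flip: distrib_left)
  obtain a where "V (Suc k) x \<le> S (Suc k) x a - \<alpha> * S k x a"
    using ex_V_Suc_le by blast
  also have "\<dots> = r x a + \<gamma> * Pv P (V k) x a + \<epsilon> (Suc k) x a"
    by (rule S_Suc_minus_S_eq_q)
  also have "\<dots> \<le> v_opt x + \<gamma> * B + \<eta>"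
    using Pv_V[of a] v_opt_ge[of x a] \<epsilon>_le[of "Suc k" x a] Suc.prems by linarith
  also have "\<dots> = v_opt x + (\<gamma> ^ Suc k * horizon + horizon * \<eta>)"
    using gamma_horizon_mult_plus[of \<eta>] by (simp add: B_def algebra_simps)
  finally show ?case
    by simp
qed

lemma sum_pow_v_opt_minus_W_le:
  assumes E_le: "\<And>j x a. 1 \<le> j \<Longrightarrow> j \<le> K \<Longrightarrow> \<bar>E j x a\<bar> \<le> \<theta>" and \<theta>: "0 \<le> \<theta>"
  shows "k \<le> K \<Longrightarrow> (\<Sum>j<k. \<alpha> ^ j) * v_opt x - W k x \<le> horizon * A_gamma \<gamma> \<alpha> k + horizon * \<theta>"
proof (induction k arbitrary: x)
  case 0
  then show ?case
    using mult_nonneg_nonneg[OF horizon_nonneg \<theta>] by (simp add: A_gamma_def)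
next
  case (Suc k)
  define A where "A = (\<Sum>j<k. \<alpha> ^ j)"
  define R where "R = horizon * A_gamma \<gamma> \<alpha> k + horizon * \<theta>"
  have "A * v_opt z - R \<le> W k z" for z
    using Suc.IH[OF Suc_leD[OF Suc.prems], of z] unfolding A_def R_def by linarith
  then have "Pv P (\<lambda>z. A * v_opt z - R) x a \<le> Pv P (W k) x a" for a
    by (rule Pv_mono[OF stochastic_kernel])
  then have Pv_W: "\<gamma> * (A * Pv P v_opt x a) - \<gamma> * R \<le> \<gamma> * Pv P (W k) x a" for a
    using gamma_nonneg mult_left_mono
    by (fastforce simp: Pv_diff Pv_cmult Pv_const[OF stochastic_kernel] simp flip: right_diff_distrib)
  obtain a where a: "v_opt x = r x a + \<gamma> * Pv P v_opt x a"
    using ex_v_opt_eq by blast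
  have "S (Suc k) x a \<le> W (Suc k) x"
    unfolding W_eq_Max by (rule Max_ge) auto
  then have "(A + \<alpha> ^ k) * r x a + \<gamma> * Pv P (W k) x a + E (Suc k) x a \<le> W (Suc k) x"
    by (simp add: S_eq[of "Suc k"] A_def)
  moreover have "(A + \<alpha> ^ k) * v_opt x
      = (A + \<alpha> ^ k) * r x a + \<gamma> * (A * Pv P v_opt x a) + \<gamma> * \<alpha> ^ k * Pv P v_opt x a"
    by (subst a) (simp add: algebra_simps)
  moreover have "\<gamma> * \<alpha> ^ k * Pv P v_opt x a \<le> \<gamma> * \<alpha> ^ k * horizon"
    using Pv_abs_le[OF stochastic_kernel v_opt_abs_le] gamma_nonneg alpha_nonneg
    by (intro mult_left_mono) (auto simp: abs_le_iff)
  moreover have "- \<theta> \<le> E (Suc k) x a"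
    using E_le[of "Suc k" x a] Suc.prems by simp
  moreover have "\<gamma> * R + \<gamma> * \<alpha> ^ k * horizon + \<theta> = horizon * A_gamma \<gamma> \<alpha> (Suc k) + horizon * \<theta>"
    using gamma_horizon_mult_plus[of \<theta>] by (simp add: R_def A_gamma_Suc algebra_simps)
  ultimately show ?case
    using Pv_W[of a] by (simp add: A_def)
qed

lemma W_prev_minus_W_le:
  assumes \<epsilon>_le: "\<And>j x a. 1 \<le> j \<Longrightarrow> j \<le> K \<Longrightarrow> \<bar>\<epsilon> j x a\<bar> \<le> \<eta>"
    and E_le: "\<And>j x a. 1 \<le> j \<Longrightarrow> j \<le> K \<Longrightarrow> (1 - \<alpha>) * \<bar>E j x a\<bar> \<le> \<eta>"
    and \<eta>: "0 \<le> \<eta>"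
  shows "k \<le> K \<Longrightarrow> W (k - 1) x - W k x \<le> pow_mix_sum \<gamma> \<alpha> k + 2 * horizon * \<eta>"
proof (induction k arbitrary: x)
  case 0
  then show ?case
    using mult_nonneg_nonneg[OF horizon_nonneg \<eta>] by (simp add: mult.commute)
next
  case (Suc k)
  define L where "L = pow_mix_sum \<gamma> \<alpha> k + 2 * horizon * \<eta>"
  have "- L \<le> W k z - W (k - 1) z" for z
    using Suc.IH[OF Suc_leD[OF Suc.prems], of z] unfolding L_def by linarith
  then have "Pv P (\<lambda>_. - L) x b \<le> Pv P (\<lambda>z. W k z - W (k - 1) z) x b" for b
    by (rule Pv_mono[OF stochastic_kernel])
  then have Pv_W: "- (\<gamma> * L) \<le> \<gamma> * Pv P (\<lambda>z. W k z - W (k - 1) z) x b" for b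
    using gamma_nonneg mult_left_mono by (fastforce simp: Pv_const[OF stochastic_kernel])
  obtain b where "S (Suc k) x b - S k x b \<le> W (Suc k) x - W k x"
    using ex_le_W_Suc_minus_W by blast
  moreover have "- (\<alpha> ^ k) \<le> \<alpha> ^ k * r x b"
    using mult_left_mono[of "- 1" "r x b" "\<alpha> ^ k"] reward_abs_le[of x b] alpha_nonneg
    by (simp add: abs_le_iff)
  moreover have "- \<eta> \<le> \<epsilon> (Suc k) x b"
    using \<epsilon>_le[of "Suc k" x b] Suc.prems by simp
  moreover have "(1 - \<alpha>) * E k x b \<le> \<eta>"
    using E_le[of k x b] Suc.prems \<eta> alpha_lt_1
    by (cases "k = 0") (auto intro: order.trans[OF mult_left_mono[OF abs_ge_self]])
  moreover have "\<alpha> ^ k + \<gamma> * L + 2 * \<eta> = pow_mix_sum \<gamma> \<alpha> (Suc k) + 2 * horizon * \<eta>"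
    using gamma_horizon_mult_plus[of "2 * \<eta>"]
    by (simp add: L_def pow_mix_sum_Suc A_gamma_eq_pow_mix_sum algebra_simps)
  ultimately show ?case
    using Pv_W[of b] S_Suc_minus_S[of k x b] by simp
qed

lemma one_minus_alpha_mult_sum_pow_v_opt_minus_W_le:
  assumes E_le: "\<And>j x a. 1 \<le> j \<Longrightarrow> j \<le> K \<Longrightarrow> (1 - \<alpha>) * \<bar>E j x a\<bar> \<le> \<eta>"
    and \<eta>: "0 \<le> \<eta>" and k: "k \<le> K"
  shows "(1 - \<alpha>) * ((\<Sum>j<k. \<alpha> ^ j) * v_opt x - W k x)
         \<le> (1 - \<alpha>) * horizon * A_gamma \<gamma> \<alpha> k + horizon * \<eta>"
proof -
  have \<alpha>: "0 < 1 - \<alpha>"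
    using alpha_lt_1 by simp
  have "\<bar>E j x a\<bar> \<le> \<eta> / (1 - \<alpha>)" if "1 \<le> j" "j \<le> K" for j x a
    using E_le[OF that, of x a] \<alpha> by (simp add: pos_le_divide_eq mult.commute)
  then have "(\<Sum>j<k. \<alpha> ^ j) * v_opt x - W k x \<le> horizon * A_gamma \<gamma> \<alpha> k + horizon * (\<eta> / (1 - \<alpha>))"
    using \<eta> \<alpha> k by (intro sum_pow_v_opt_minus_W_le) auto
  then have "(1 - \<alpha>) * ((\<Sum>j<k. \<alpha> ^ j) * v_opt x - W k x)
             \<le> (1 - \<alpha>) * (horizon * A_gamma \<gamma> \<alpha> k + horizon * (\<eta> / (1 - \<alpha>)))"
    using \<alpha> by (intro mult_left_mono) auto
  also have "\<dots> = (1 - \<alpha>) * horizon * A_gamma \<gamma> \<alpha> k + horizon * \<eta>"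
    using \<alpha> by (simp add: distrib_left)
  finally show ?thesis .
qed

lemma alpha_mult_W_prev_minus_W_le:
  assumes \<epsilon>_le: "\<And>j x a. 1 \<le> j \<Longrightarrow> j \<le> K \<Longrightarrow> \<bar>\<epsilon> j x a\<bar> \<le> \<eta>"
    and E_le: "\<And>j x a. 1 \<le> j \<Longrightarrow> j \<le> K \<Longrightarrow> (1 - \<alpha>) * \<bar>E j x a\<bar> \<le> \<eta>"
    and \<eta>: "0 \<le> \<eta>" and k: "k \<le> K"
  shows "\<alpha> * (W (k - 1) x - W k x) \<le> \<alpha> * pow_mix_sum \<gamma> \<alpha> k + 2 * horizon * \<eta>"
proof -
  have "\<alpha> * (W (k - 1) x - W k x) \<le> \<alpha> * (pow_mix_sum \<gamma> \<alpha> k + 2 * horizon * \<eta>)"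
    using W_prev_minus_W_le[OF \<epsilon>_le E_le \<eta> k] alpha_nonneg by (intro mult_left_mono)
  also have "\<dots> = \<alpha> * pow_mix_sum \<gamma> \<alpha> k + \<alpha> * (2 * horizon * \<eta>)"
    by (rule distrib_left)
  also have "\<dots> \<le> \<alpha> * pow_mix_sum \<gamma> \<alpha> k + 2 * horizon * \<eta>"
    using horizon_nonneg \<eta> alpha_nonneg alpha_lt_1 by (intro add_left_mono mult_left_le_one_le) auto
  finally show ?thesis .
qed

lemma v_opt_minus_V_le:
  assumes \<epsilon>_le: "\<And>j x a. 1 \<le> j \<Longrightarrow> j \<le> K \<Longrightarrow> \<bar>\<epsilon> j x a\<bar> \<le> \<eta>"
    and E_le: "\<And>j x a. 1 \<le> j \<Longrightarrow> j \<le> K \<Longrightarrow> (1 - \<alpha>) * \<bar>E j x a\<bar> \<le> \<eta>"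
    and \<eta>: "0 \<le> \<eta>" and k: "k \<le> K"
  shows "v_opt x - V k x
         \<le> horizon * ((1 - \<alpha>) * A_gamma \<gamma> \<alpha> k + \<alpha> ^ k + (1 - \<gamma>) * \<alpha> * pow_mix_sum \<gamma> \<alpha> k)
            + 3 * horizon * \<eta>"
proof -
  define A where "A = (\<Sum>j<k. \<alpha> ^ j)"
  have "(1 - \<alpha>) * A + \<alpha> ^ k = 1"
    using one_diff_power_eq[of \<alpha> k] by (simp add: A_def)
  moreover have "(1 - \<alpha>) * (A * v_opt x - W k x) + \<alpha> ^ k * v_opt x + \<alpha> * (W (k - 1) x - W k x)
      = ((1 - \<alpha>) * A + \<alpha> ^ k) * v_opt x - (W k x - \<alpha> * W (k - 1) x)"
    by (simp add: algebra_simps)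
  ultimately have "v_opt x - V k x
      = (1 - \<alpha>) * (A * v_opt x - W k x) + \<alpha> ^ k * v_opt x + \<alpha> * (W (k - 1) x - W k x)"
    by (simp add: V_eq)
  moreover have "\<alpha> ^ k * v_opt x \<le> \<alpha> ^ k * horizon"
    using v_opt_abs_le[of x] alpha_nonneg by (intro mult_left_mono) (auto simp: abs_le_iff)
  moreover have "horizon * ((1 - \<alpha>) * A_gamma \<gamma> \<alpha> k + \<alpha> ^ k + (1 - \<gamma>) * \<alpha> * pow_mix_sum \<gamma> \<alpha> k)
      = (1 - \<alpha>) * horizon * A_gamma \<gamma> \<alpha> k + \<alpha> ^ k * horizon
        + (horizon * (1 - \<gamma>)) * \<alpha> * pow_mix_sum \<gamma> \<alpha> k"
    by (simp add: algebra_simps)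
  ultimately show ?thesis
    using one_minus_alpha_mult_sum_pow_v_opt_minus_W_le[OF E_le \<eta> k, of x]
      alpha_mult_W_prev_minus_W_le[OF \<epsilon>_le E_le \<eta> k, of x]
      horizon_mult_one_minus_gamma mult_nonneg_nonneg[OF horizon_nonneg \<eta>]
    unfolding A_def by simp
qed

lemma V_dist_v_opt_le:
  assumes \<epsilon>_le: "\<And>j x a. 1 \<le> j \<Longrightarrow> j \<le> K \<Longrightarrow> \<bar>\<epsilon> j x a\<bar> \<le> \<eta>"
    and E_le: "\<And>j x a. 1 \<le> j \<Longrightarrow> j \<le> K \<Longrightarrow> (1 - \<alpha>) * \<bar>E j x a\<bar> \<le> \<eta>"
    and \<eta>: "0 \<le> \<eta>" and k: "1 \<le> k" "k \<le> K"
  shows "\<bar>V k x - v_opt x\<bar>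
         \<le> 2 * horizon * min 1 (2 * max \<alpha> \<gamma> ^ (k - 1) + (1 - \<alpha>) * A_gamma \<gamma> \<alpha> (k - 1) + 2 * \<eta>)"
proof -
  obtain m where m: "k = Suc m"
    using k(1) by (cases k) auto
  define b where "b = max \<alpha> \<gamma> ^ m"
  define A where "A = A_gamma \<gamma> \<alpha> m"
  have nonneg: "0 \<le> horizon * b" "0 \<le> horizon * ((1 - \<alpha>) * A)" "0 \<le> horizon * \<eta>"
    using horizon_nonneg gamma_nonneg alpha_nonneg alpha_lt_1 \<eta> A_gamma_nonneg[OF gamma_nonneg alpha_nonneg]
    by (simp_all add: b_def A_def)
  have "\<gamma> ^ k * horizon \<le> horizon * b"
    using mult_left_mono[OF power_Suc_le_max_power[OF gamma_nonneg less_imp_le[OF gamma_lt_1]] horizon_nonneg]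
    by (simp add: m b_def mult.commute)
  then have "V k x - v_opt x \<le> horizon * b + horizon * \<eta>"
    using V_minus_v_opt_le[OF \<epsilon>_le \<eta> k(2), of x] by linarith
  moreover have "v_opt x - V k x \<le> horizon * (3 * b + 2 * (1 - \<alpha>) * A) + 3 * horizon * \<eta>"
    using v_opt_minus_V_le[OF \<epsilon>_le E_le \<eta> k(2), of x] horizon_nonneg
      mult_left_mono[OF A_gamma_Suc_error_le[OF alpha_nonneg alpha_lt_1 gamma_nonneg gamma_lt_1, of m]]
    unfolding m b_def A_def by fastforce
  moreover have "\<bar>V k x - v_opt x\<bar> \<le> 2 * horizon * 1"
    using V_abs_le[of k x] v_opt_abs_le[of x] by linarith
  ultimately show ?thesis
    using horizon_nonneg nonneg unfolding m b_def A_def min_mult_distrib_left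
    by (simp add: algebra_simps)
qed

end

lemma iota1_pos:
  assumes "0 < K" "0 < nX" "0 < nA" "0 < \<delta>" "\<delta> < 1"
  shows "0 < iota1 K nX nA \<delta>"
proof -
  have "0 < K * nX * nA"
    using assms(1-3) by simp
  then have "1 \<le> real K * real nX * real nA"
    by (metis Suc_leI of_nat_1 of_nat_le_iff of_nat_mult One_nat_def)
  then have "1 < 8 * real K * real nX * real nA / \<delta>"
    using assms(4,5) by (simp add: field_simps)
  then show ?thesis
    by (simp add: iota1_def)
qed

lemma one_minus_mult_le_of_le_sqrt_A_inf:
  assumes \<alpha>: "0 \<le> \<alpha>" "\<alpha> < 1" and "0 \<le> c" "0 \<le> t"
    and e: "e \<le> c * sqrt (A_inf \<alpha> * t)"
  shows "(1 - \<alpha>) * e \<le> c * sqrt t"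
proof -
  have "((1 - \<alpha>) * sqrt (A_inf \<alpha> * t))\<^sup>2 = (1 - \<alpha>)\<^sup>2 * (t / (1 - \<alpha>))"
    using assms by (simp add: A_inf_def power_mult_distrib)
  also have "\<dots> = (1 - \<alpha>) * t"
    using assms by (simp add: power2_eq_square)
  also have "\<dots> \<le> t"
    using assms by (simp add: mult_left_le_one_le)
  finally have "(1 - \<alpha>) * sqrt (A_inf \<alpha> * t) \<le> sqrt t"
    by (rule real_le_rsqrt)
  then have "c * ((1 - \<alpha>) * sqrt (A_inf \<alpha> * t)) \<le> c * sqrt t"
    using assms by (intro mult_left_mono)
  moreover have "(1 - \<alpha>) * e \<le> (1 - \<alpha>) * (c * sqrt (A_inf \<alpha> * t))"
    using \<alpha> e by (intro mult_left_mono) auto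
  ultimately show ?thesis
    by (simp add: ac_simps)
qed

theorem lemma6:
  fixes P :: "'x::finite \<Rightarrow> 'a::finite \<Rightarrow> 'x \<Rightarrow> real"
    and r :: "'x \<Rightarrow> 'a \<Rightarrow> real"
    and \<gamma> \<alpha> \<delta> :: real
    and K M :: nat
    and y :: "nat \<Rightarrow> nat \<Rightarrow> 'x \<Rightarrow> 'a \<Rightarrow> 'x"
  defines "H \<equiv> 1 / (1 - \<gamma>)"
    and "\<iota> \<equiv> iota1 K (card (UNIV :: 'x set)) (card (UNIV :: 'a set)) \<delta>"
  assumes mdp: "is_mdp P r \<gamma>"
    and alpha: "0 \<le> \<alpha>" "\<alpha> < 1"
    and KM: "0 < K" "0 < M"
    and delta: "0 < \<delta>" "\<delta> < 1"
    and samples: "\<And>k m x a. k < K \<Longrightarrow> m < M \<Longrightarrow> 0 < P x a (y k m x a)"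
    and E1: "\<And>k x a. 1 \<le> k \<Longrightarrow> k \<le> K \<Longrightarrow>
               \<bar>mdvi_E P r \<gamma> \<alpha> M y k x a\<bar> < 3 * H * sqrt (A_inf \<alpha> * \<iota> / real M)"
    and E2: "\<And>k x a. 1 \<le> k \<Longrightarrow> k \<le> K \<Longrightarrow>
               \<bar>mdvi_eps P r \<gamma> \<alpha> M y k x a\<bar> < 3 * H * sqrt (\<iota> / real M)"
  shows "(\<forall>k\<in>{1..K-1}. \<forall>x a.
            sigmaP P (mdvi_v r \<gamma> \<alpha> M y k) x a
              \<le> 2 * H * min 1 (2 * (max \<alpha> \<gamma>) ^ (k - 1) + A_gamma \<gamma> \<alpha> (k - 1) / A_inf \<alpha>
                                 + 6 * H * sqrt (\<iota> / real M))
                + sigmaP P (vstar P r \<gamma>) x a)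
         \<and> (\<forall>x a. sigmaP P (mdvi_v r \<gamma> \<alpha> M y 0) x a = 0)"
proof -
  interpret mdvi P r \<gamma> \<alpha> M y
    using mdp alpha KM(2) by unfold_locales
  have horizon: "horizon = H"
    by (simp add: horizon_def H_def)
  have \<iota>: "0 \<le> \<iota> / real M"
    unfolding \<iota>_def using iota1_pos[OF KM(1) _ _ delta] by (simp add: less_imp_le)
  define \<eta> where "\<eta> = 3 * H * sqrt (\<iota> / real M)"
  have \<eta>: "0 \<le> \<eta>"
    using \<iota> horizon_nonneg by (simp add: \<eta>_def horizon)
  have \<epsilon>_le: "\<bar>\<epsilon> j x a\<bar> \<le> \<eta>" if "1 \<le> j" "j \<le> K" for j x a
    using E2[OF that, of x a] by (simp add: \<eta>_def)
  have E_le: "(1 - \<alpha>) * \<bar>E j x a\<bar> \<le> \<eta>" if "1 \<le> j" "j \<le> K" for j x a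
    unfolding \<eta>_def using E1[OF that, of x a] alpha \<iota> horizon_nonneg
    by (intro one_minus_mult_le_of_le_sqrt_A_inf) (auto simp: horizon)
  have "sigmaP P (V k) x a \<le> 2 * H * min 1 (2 * max \<alpha> \<gamma> ^ (k - 1) + (1 - \<alpha>) * A_gamma \<gamma> \<alpha> (k - 1) + 2 * \<eta>)
                             + sigmaP P v_opt x a" if "1 \<le> k" "k \<le> K" for k x a
    using V_dist_v_opt_le[OF \<epsilon>_le E_le \<eta> that] by (intro sigmaP_le_add[OF stochastic_kernel]) (simp add: horizon)
  moreover have "sigmaP P (V 0) x a = 0" for x a
    by (simp add: mdvi_v_def sigmaP_def VarP_def Pv_def)
  ultimately show ?thesis
    by (auto simp: A_inf_def \<eta>_def ac_simps)
qed

end
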